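(* Let $p$ be a prime, $w\ge 1$ an integer, and let $S\subseteq\mathbb{F}_{p^w}$ with $|S|=s\le p^w-1$. Write $s=s_1p^{w-1}+s_2$ with integers $0\le s_1\le p-1$ and $0\le s_2\le p^{w-1}-1$. For $i=0,\dots,p-1$ let $T_i=\{x\in\mathbb{F}_{p^w}:\mathrm{Tr}(x)=i\}$, let $T^*_{s_1}$ be any subset of $T_{s_1}$ of size $s_2$, and let $S^\star=\left(\bigcup_{i=0}^{s_1-1}T_i\right)\cup T^*_{s_1}$. Then \[ |\omega_p^S|\le|\omega_p^{S^\star}|=\left|s_2\sum_{i=0}^{s_1}\omega_p^i+(p^{w-1}-s_2)\sum_{i=0}^{s_1-1}\omega_p^i\right|\le p^{w-1}\cdot\frac{\sin(\pi s/p^w)}{\sin(\pi/p)}. \]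
   Context: $\mathrm{Tr}:\mathbb{F}_{p^w}\to\mathbb{F}_p$ is the field trace, whose values are identified with integers in $\{0,\dots,p-1\}$; $\omega_p=e^{2\pi\mathbf i/p}\in\mathbb{C}$. For $S\subseteq\mathbb{F}_{p^w}$, $\omega_p^S:=\sum_{x\in S}\omega_p^{\mathrm{Tr}(x)}$. *)

theory Defs
  imports Complex_Main "HOL-Computational_Algebra.Primes"
begin

text \<open>The field F_{p^w} is modelled as an arbitrary finite field type of cardinality p^w
 (any two such are isomorphic). Its absolute trace to the prime field is
 Tr(x) = sum_{j<w} x^(p^j); its value lies in the prime field, which we identify with
 {0,...,p-1} via of_nat.\<close>

definition field_trace :: "nat \<Rightarrow> nat \<Rightarrow> 'a::field \<Rightarrow> 'a" where
  "field_trace p w x = (\<Sum>j<w. x ^ (p ^ j))"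

definition trace_val :: "nat \<Rightarrow> nat \<Rightarrow> 'a::field \<Rightarrow> nat" where
  "trace_val p w x = (THE k. k < p \<and> of_nat k = field_trace p w x)"

definition omega :: "nat \<Rightarrow> nat \<Rightarrow> complex" where
  "omega p k = cis (2 * pi * real k / real p)"

definition omega_sum :: "nat \<Rightarrow> nat \<Rightarrow> 'a::field set \<Rightarrow> complex" where
  "omega_sum p w S = (\<Sum>x\<in>S. omega p (trace_val p w x))"

definition trace_class :: "nat \<Rightarrow> nat \<Rightarrow> nat \<Rightarrow> 'a::field set" where
  "trace_class p w i = {x. trace_val p w x = i}"

end

theory Submission
  imports Defs "HOL-Computational_Algebra.Polynomial" "HOL-Analysis.Convex"
begin

text \<open>
  Grouping the sum by trace gives \<open>\<omega>\<^sub>p\<^sup>S = \<Sum>\<^sub>i n\<^sub>i \<omega>\<^sub>p\<^sup>i\<close> with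
  \<open>n\<^sub>i = |S \<inter> T\<^sub>i|\<close>. Every trace class has \<open>p\<^sup>w\<^sup>-\<^sup>1\<close> elements, because translation
  by \<open>j d\<close> with \<open>Tr d = 1\<close> maps \<open>T\<^sub>0\<close> onto \<open>T\<^sub>j\<close>; so the weights satisfy
  \<open>0 \<le> n\<^sub>i \<le> p\<^sup>w\<^sup>-\<^sup>1\<close> and \<open>\<Sum>\<^sub>i n\<^sub>i = s\<close>.
  After rotating the sum onto the positive real axis its modulus is the linear functional
  \<open>\<Sum>\<^sub>i n\<^sub>i cos (2\<pi>(i - x)/p)\<close> of the weights, which under these constraints is largest
  when the weight fills the \<open>s\<^sub>1\<close> residues with the largest cosines and puts the remainder
  \<open>s\<^sub>2\<close> on the next one. These residues form an arc, so the maximum is the modulus of a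
  rotated \<open>\<omega>\<^sub>p\<^sup>S\<^sup>\<star>\<close>. Finally \<open>\<omega>\<^sub>p\<^sup>S\<^sup>\<star>\<close> is a combination with weights
  \<open>p\<^sup>w\<^sup>-\<^sup>1 - s\<^sub>2\<close> and \<open>s\<^sub>2\<close> of two partial geometric sums of moduli
  \<open>sin (k\<pi>/p) / sin (\<pi>/p)\<close>, and concavity of \<open>sin\<close> on \<open>[0, \<pi>]\<close> gives the sine bound.
\<close>

section \<open>Partial sums of roots of unity\<close>

lemma cis_mult_sin: "2 * \<i> * (cis a * complex_of_real (sin b)) = cis (a + b) - cis (a - b)"
  by (simp add: complex_eq_iff sin_add sin_diff cos_add cos_diff algebra_simps)

lemma sum_cis_mult_sin:
  "(\<Sum>i<m. cis (2 * t * real i)) * complex_of_real (sin t)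
     = cis ((real m - 1) * t) * complex_of_real (sin (real m * t))"
proof (induction m)
  case (Suc m)
  define u where "u = real m * t"
  have "2 * \<i> * (cis ((real m - 1) * t) * complex_of_real (sin (real m * t))
                + cis (2 * t * real m) * complex_of_real (sin t))
      = (cis (2 * u - t) - cis (- t)) + (cis (2 * u + t) - cis (2 * u - t))"
    unfolding distrib_left cis_mult_sin u_def by (simp add: algebra_simps)
  also have "\<dots> = 2 * \<i> * (cis u * complex_of_real (sin (u + t)))"
    unfolding cis_mult_sin by (simp add: algebra_simps)
  finally have "cis ((real m - 1) * t) * complex_of_real (sin (real m * t))
                + cis (2 * t * real m) * complex_of_real (sin t)
              = cis u * complex_of_real (sin (u + t))"
    by simp
  then show ?case
    using Suc by (simp add: distrib_right u_def algebra_simps)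
qed simp

lemma norm_sum_omega_mult_sin:
  assumes "m \<le> p"
  shows "cmod (\<Sum>i<m. omega p i) * sin (pi / real p) = sin (pi * real m / real p)"
proof -
  have "(\<Sum>i<m. omega p i) * complex_of_real (sin (pi / real p))
      = cis ((real m - 1) * (pi / real p)) * complex_of_real (sin (real m * (pi / real p)))"
    unfolding omega_def using sum_cis_mult_sin[of "pi / real p" m] by (simp add: mult_ac)
  then have "cmod (\<Sum>i<m. omega p i) * \<bar>sin (pi / real p)\<bar> = \<bar>sin (pi * real m / real p)\<bar>"
    by (metis norm_mult norm_cis norm_of_real mult_1 times_divide_eq_right mult.commute)
  moreover have "pi * real m / real p \<le> pi" "pi / real p \<le> pi"
    using assms by (cases "p = 0"; simp add: divide_le_eq)+
  then have "\<bar>sin (pi * real m / real p)\<bar> = sin (pi * real m / real p)"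
    and "\<bar>sin (pi / real p)\<bar> = sin (pi / real p)"
    by (simp_all add: sin_ge_zero)
  ultimately show ?thesis
    by simp
qed

lemma concave_on_sin: "concave_on {0..pi} sin"
  by (rule f''_le0_imp_concave[where f' = cos and f'' = "\<lambda>x. - sin x"])
     (auto intro!: DERIV_sin DERIV_cos sin_ge_zero)

lemma norm_arc_sum_le:
  fixes p k :: nat and q r :: real
  assumes "p \<ge> 2" "k < p" "0 < q" "0 \<le> r" "r \<le> q"
  shows "cmod (of_real q * (\<Sum>i<k. omega p i) + of_real r * omega p k)
         \<le> q * sin (pi * (real k * q + r) / (q * real p)) / sin (pi / real p)"
proof -
  define G where "G m = (\<Sum>i<m. omega p i)" for m
  define a where "a = pi * real k / real p"
  define b where "b = pi * real (Suc k) / real p"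
  define x where "x = r / q"
  have "0 < sin (pi / real p)"
    using assms(1) by (intro sin_gt_zero) (auto simp: field_simps)
  have "pi * real (Suc k) \<le> pi * real p"
    using assms(2) by (intro mult_left_mono) auto
  then have ab: "a \<in> {0..pi}" "b \<in> {0..pi}"
    using assms(2) by (auto simp: a_def b_def divide_le_eq)
  have x: "0 \<le> x" "x \<le> 1"
    using assms(3-5) by (auto simp: x_def field_simps)
  have "of_real q * G k + of_real r * omega p k = of_real (q - r) * G k + of_real r * G (Suc k)"
    by (simp add: G_def algebra_simps)
  also have "cmod \<dots> \<le> cmod (of_real (q - r) * G k) + cmod (of_real r * G (Suc k))"
    by (rule norm_triangle_ineq)
  also have "\<dots> = (q - r) * cmod (G k) + r * cmod (G (Suc k))"
    using assms(4,5) by (simp add: norm_mult del: of_real_diff)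
  finally have "cmod (of_real q * G k + of_real r * omega p k) * sin (pi / real p)
      \<le> ((q - r) * cmod (G k) + r * cmod (G (Suc k))) * sin (pi / real p)"
    using \<open>0 < sin (pi / real p)\<close> by (intro mult_right_mono) auto
  also have "\<dots> = (q - r) * (cmod (G k) * sin (pi / real p)) + r * (cmod (G (Suc k)) * sin (pi / real p))"
    by (simp add: algebra_simps)
  also have "\<dots> = (q - r) * sin a + r * sin b"
    using assms(2) unfolding G_def a_def b_def by (simp only: norm_sum_omega_mult_sin Suc_le_eq less_imp_le)
  also have "\<dots> = q * ((1 - x) * sin a + x * sin b)"
    using assms(3) by (simp add: x_def field_simps)
  also have "\<dots> \<le> q * sin ((1 - x) * a + x * b)"
    using concave_onD[OF concave_on_sin x ab] assms(3) by simp
  also have "(1 - x) * a + x * b = pi * (real k * q + r) / (q * real p)"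
    using assms(1,3) by (simp add: a_def b_def x_def field_simps)
  finally show ?thesis
    using \<open>0 < sin (pi / real p)\<close> by (simp add: G_def field_simps)
qed

section \<open>Maximising a weighted sum of roots of unity\<close>

text \<open>\<open>\<omega>\<close> with integer exponents, so that arcs of residues may start at a negative index.\<close>

definition zeta :: "nat \<Rightarrow> int \<Rightarrow> complex" where
  "zeta p k = cis (2 * pi * of_int k / real p)"

lemma zeta_add: "zeta p (a + b) = zeta p a * zeta p b"
  by (simp add: zeta_def cis_mult add_divide_distrib distrib_left)

lemma zeta_of_nat: "zeta p (int i) = omega p i"
  by (simp add: zeta_def omega_def)

lemma zeta_uminus: "zeta p (- a) = cnj (zeta p a)"
  by (simp add: zeta_def cis_cnj)

lemma norm_zeta [simp]: "cmod (zeta p a) = 1"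
  by (simp add: zeta_def)

lemma zeta_mod: "p > 0 \<Longrightarrow> zeta p (k mod int p) = zeta p k"
proof -
  assume "p > 0"
  have "2 * pi * of_int (int p * (k div int p)) / real p = 2 * pi * of_int (k div int p)"
    using \<open>p > 0\<close> by simp
  then have "zeta p (int p * (k div int p)) = 1"
    unfolding zeta_def by (simp only: cis_multiple_2pi Ints_of_int)
  then show ?thesis
    using zeta_add[of p "k mod int p" "int p * (k div int p)"] by simp
qed

lemma sum_lessThan_eq_sum_window_mod:
  fixes f :: "nat \<Rightarrow> 'b::comm_monoid_add"
  assumes "p > 0"
  shows "(\<Sum>i<p. f i) = (\<Sum>k\<in>{m..m + int p - 1}. f (nat (k mod int p)))"
proof (rule sum.reindex_bij_witness[of _ "\<lambda>k. nat (k mod int p)" "\<lambda>i. m + (int i - m) mod int p"])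
  fix i assume "i \<in> {..<p}"
  then show "nat ((m + (int i - m) mod int p) mod int p) = i"
    by (simp add: mod_add_right_eq)
  show "m + (int i - m) mod int p \<in> {m..m + int p - 1}"
    using assms pos_mod_bound[of "int p" "int i - m"] pos_mod_sign[of "int p" "int i - m"] by auto
next
  fix k assume k: "k \<in> {m..m + int p - 1}"
  have "(k mod int p - m) mod int p = k - m"
    using k by (simp add: mod_diff_left_eq)
  then show "m + (int (nat (k mod int p)) - m) mod int p = k"
    using assms by simp
  show "nat (k mod int p) \<in> {..<p}"
    using assms by (simp add: nat_less_iff)
qed (simp add: mod_add_right_eq)

lemma weighted_sum_le_bathtub:
  fixes N c :: "'b \<Rightarrow> real"
  assumes "finite R" "A \<subseteq> R" "j \<in> R" "j \<notin> A"
    and N: "\<And>k. k \<in> R \<Longrightarrow> 0 \<le> N k \<and> N k \<le> q"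
    and sum_N: "(\<Sum>k\<in>R. N k) = real (card A) * q + r"
    and c_A: "\<And>k. k \<in> A \<Longrightarrow> c j \<le> c k"
    and c_rest: "\<And>k. k \<in> R - A - {j} \<Longrightarrow> c k \<le> c j"
  shows "(\<Sum>k\<in>R. N k * c k) \<le> q * (\<Sum>k\<in>A. c k) + r * c j"
proof -
  define G where "G k = (if k \<in> A then q else 0) + (if k = j then r else 0)" for k
  have sum_R_A: "(\<Sum>k\<in>R. if k \<in> A then f k else 0) = (\<Sum>k\<in>A. f k)" for f :: "'b \<Rightarrow> real"
    using sum.inter_restrict[OF assms(1), of f A] assms(2) by (simp add: Int_absorb1)
  have sum_G: "(\<Sum>k\<in>R. G k) = real (card A) * q + r"
    using assms(1,3) sum_R_A[of "\<lambda>_. q"] by (simp add: G_def sum.distrib)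
  have "(\<Sum>k\<in>R. G k * c k)
      = (\<Sum>k\<in>R. if k \<in> A then q * c k else 0) + (\<Sum>k\<in>R. if k = j then r * c k else 0)"
    unfolding sum.distrib[symmetric] by (intro sum.cong) (auto simp: G_def distrib_right)
  then have sum_Gc: "(\<Sum>k\<in>R. G k * c k) = q * (\<Sum>k\<in>A. c k) + r * c j"
    using assms(1,3) by (simp add: sum_R_A sum_distrib_left)
  have "(N k - G k) * (c k - c j) \<le> 0" if "k \<in> R" for k
    using N[OF that] c_A[of k] c_rest[of k] that assms(4)
    by (cases "k \<in> A"; cases "k = j") (auto simp: G_def mult_nonpos_nonneg mult_nonneg_nonpos)
  then have "(\<Sum>k\<in>R. (N k - G k) * (c k - c j)) \<le> 0"
    by (rule sum_nonpos)
  moreover have "(\<Sum>k\<in>R. (N k - G k) * (c k - c j))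
      = (\<Sum>k\<in>R. N k * c k - G k * c k - c j * (N k - G k))"
    by (simp add: algebra_simps)
  also have "\<dots> = (\<Sum>k\<in>R. N k * c k) - (\<Sum>k\<in>R. G k * c k) - c j * ((\<Sum>k\<in>R. N k) - (\<Sum>k\<in>R. G k))"
    by (simp add: sum_subtractf sum_distrib_left[symmetric])
  ultimately show ?thesis
    using sum_Gc sum_N sum_G by simp
qed

lemma cos_2pi_div_mono:
  fixes a b :: real
  assumes "\<bar>a\<bar> \<le> \<bar>b\<bar>" "\<bar>b\<bar> \<le> real p / 2"
  shows "cos (2 * pi * b / real p) \<le> cos (2 * pi * a / real p)"
proof -
  have "2 * pi * \<bar>a\<bar> / real p \<le> 2 * pi * \<bar>b\<bar> / real p"
    using assms(1) by (intro divide_right_mono mult_left_mono) auto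
  moreover have "2 * pi * \<bar>b\<bar> / real p \<le> pi"
    using assms(2) by (cases "p = 0") (auto simp: divide_le_eq)
  ultimately have "cos (2 * pi * \<bar>b\<bar> / real p) \<le> cos (2 * pi * \<bar>a\<bar> / real p)"
    by (intro cos_monotone_0_pi_le) auto
  moreover have "cos (2 * pi * \<bar>t\<bar> / real p) = cos (2 * pi * t / real p)" for t
    using cos_abs_real[of "2 * pi * t / real p"] by (simp add: abs_mult)
  ultimately show ?thesis
    by simp
qed

lemma cos_far_le_cos_near:
  fixes d e h :: real
  assumes "\<bar>e\<bar> \<le> h" "h \<le> d" "h \<le> real p - d"
  shows "cos (2 * pi * d / real p) \<le> cos (2 * pi * e / real p)"
proof (cases "d \<le> real p / 2")
  case True
  then show ?thesis
    using assms by (intro cos_2pi_div_mono) auto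
next
  case False
  then have "p > 0"
    using assms abs_ge_zero[of e] by (cases p) auto
  then have "cos (2 * pi * d / real p) = cos (2 * pi * (d - real p) / real p)"
    by (simp add: diff_divide_distrib right_diff_distrib cos_diff)
  also have "\<dots> \<le> cos (2 * pi * e / real p)"
    using False assms by (intro cos_2pi_div_mono) auto
  finally show ?thesis .
qed

lemma closest_arc:
  fixes x :: real and p s :: nat
  assumes "s < p"
  obtains m j :: int and A :: "int set"
  where "(A = {m..m + int s - 1} \<and> j = m + int s) \<or> (A = {m + 1..m + int s} \<and> j = m)"
    and "\<And>k. k \<in> A \<Longrightarrow> cos (2 * pi * (of_int j - x) / real p) \<le> cos (2 * pi * (of_int k - x) / real p)"
    and "\<And>k. k \<in> {m..m + int p - 1} - A - {j}
           \<Longrightarrow> cos (2 * pi * (of_int k - x) / real p) \<le> cos (2 * pi * (of_int j - x) / real p)"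
proof -
  \<comment> \<open>\<open>x\<close> lies within \<open>1/2\<close> of the midpoint \<open>m + s/2\<close> of \<open>{m..m+s}\<close>; the arc then
      drops whichever endpoint of \<open>{m..m+s}\<close> is farther from \<open>x\<close>.\<close>
  define m where "m = \<lfloor>x - real s / 2 + 1 / 2\<rfloor>"
  define h where "h = (real s + 1) / 2"
  have m: "of_int m \<le> x - real s / 2 + 1 / 2" "x - real s / 2 + 1 / 2 < of_int m + 1"
    unfolding m_def by linarith+
  obtain j A where shape: "(A = {m..m + int s - 1} \<and> j = m + int s) \<or> (A = {m + 1..m + int s} \<and> j = m)"
    and j_near: "\<bar>of_int j - x\<bar> \<le> h"
    and A_nearer: "\<And>k. k \<in> A \<Longrightarrow> \<bar>of_int k - x\<bar> \<le> \<bar>of_int j - x\<bar>"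
  proof (cases "x - of_int m \<le> of_int m + real s - x")
    case True
    show ?thesis
      by (rule that[of "{m..m + int s - 1}" "m + int s"]) (use True m in \<open>auto simp: h_def\<close>)
  next
    case False
    show ?thesis
      by (rule that[of "{m + 1..m + int s}" m]) (use False m in \<open>auto simp: h_def\<close>)
  qed
  show ?thesis
  proof (rule that[OF shape])
    fix k assume "k \<in> A"
    then show "cos (2 * pi * (of_int j - x) / real p) \<le> cos (2 * pi * (of_int k - x) / real p)"
      using A_nearer j_near assms by (intro cos_2pi_div_mono) (auto simp: h_def)
  next
    fix k assume k: "k \<in> {m..m + int p - 1} - A - {j}"
    then have "of_int m + real s + 1 \<le> of_int k" "of_int k \<le> of_int m + real p - 1"
      using shape by auto
    then show "cos (2 * pi * (of_int k - x) / real p) \<le> cos (2 * pi * (of_int j - x) / real p)"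
      using j_near m by (intro cos_far_le_cos_near[where h = h]) (auto simp: h_def)
  qed
qed

lemma norm_arc_zeta_right:
  "cmod (of_real q * (\<Sum>k\<in>{m..m + int s - 1}. zeta p k) + of_real r * zeta p (m + int s))
   = cmod (of_real q * (\<Sum>i<s. omega p i) + of_real r * omega p s)"
proof -
  have "(\<Sum>k\<in>{m..m + int s - 1}. zeta p k) = (\<Sum>i<s. zeta p (m + int i))"
    by (rule sum.reindex_bij_witness[of _ "\<lambda>i. m + int i" "\<lambda>k. nat (k - m)"]) auto
  then have "of_real q * (\<Sum>k\<in>{m..m + int s - 1}. zeta p k) + of_real r * zeta p (m + int s)
      = zeta p m * (of_real q * (\<Sum>i<s. omega p i) + of_real r * omega p s)"
    by (simp add: zeta_add zeta_of_nat sum_distrib_left algebra_simps)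
  then show ?thesis
    by (simp add: norm_mult)
qed

lemma norm_arc_zeta_left:
  "cmod (of_real q * (\<Sum>k\<in>{m + 1..m + int s}. zeta p k) + of_real r * zeta p m)
   = cmod (of_real q * (\<Sum>i<s. omega p i) + of_real r * omega p s)"
proof -
  have reflect: "zeta p (m + int s - int i) = zeta p (m + int s) * cnj (omega p i)" for i
    by (metis zeta_add zeta_of_nat zeta_uminus diff_conv_add_uminus)
  have "(\<Sum>k\<in>{m + 1..m + int s}. zeta p k) = (\<Sum>i<s. zeta p (m + int s - int i))"
    by (rule sum.reindex_bij_witness[of _ "\<lambda>i. m + int s - int i" "\<lambda>k. nat (m + int s - k)"]) auto
  then have "of_real q * (\<Sum>k\<in>{m + 1..m + int s}. zeta p k) + of_real r * zeta p m
      = zeta p (m + int s) * cnj (of_real q * (\<Sum>i<s. omega p i) + of_real r * omega p s)"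
    using reflect[of s] by (simp add: reflect sum_distrib_left algebra_simps)
  then show ?thesis
    by (simp only: norm_mult norm_zeta complex_mod_cnj mult_1)
qed

lemma Re_zeta_mult_cis:
  assumes "p > 0"
  shows "Re (zeta p k * cis (- t)) = cos (2 * pi * (of_int k - t * real p / (2 * pi)) / real p)"
proof -
  have "2 * pi * of_int k / real p + - t = 2 * pi * (of_int k - t * real p / (2 * pi)) / real p"
    using assms by (simp add: field_simps)
  then show ?thesis
    by (simp add: zeta_def cis_mult)
qed

lemma Re_mult_cis_uminus_Arg: "Re (z * cis (- Arg z)) = cmod z"
proof -
  have "z * cis (- Arg z) = of_real (cmod z) * (cis (Arg z) * cis (- Arg z))"
    by (metis rcis_cmod_Arg rcis_def mult.assoc)
  then show ?thesis
    by (simp add: cis_mult)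
qed

lemma norm_weighted_omega_sum_le_arc:
  fixes p s :: nat and q r :: real and n :: "nat \<Rightarrow> real"
  assumes "s < p"
    and n: "\<And>i. i < p \<Longrightarrow> 0 \<le> n i \<and> n i \<le> q"
    and sum_n: "(\<Sum>i<p. n i) = real s * q + r"
  shows "cmod (\<Sum>i<p. of_real (n i) * omega p i)
         \<le> cmod (of_real q * (\<Sum>i<s. omega p i) + of_real r * omega p s)"
proof -
  define z where "z = (\<Sum>i<p. of_real (n i) * omega p i)"
  define x where "x = Arg z * real p / (2 * pi)"
  define c where "c k = cos (2 * pi * (of_int k - x) / real p)" for k
  have "p > 0"
    using assms(1) by simp
  have c_Re: "c k = Re (zeta p k * cis (- Arg z))" for k
    using Re_zeta_mult_cis[OF \<open>p > 0\<close>] by (simp add: c_def x_def)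
  obtain m j A where shape: "(A = {m..m + int s - 1} \<and> j = m + int s) \<or> (A = {m + 1..m + int s} \<and> j = m)"
    and c_A: "\<And>k. k \<in> A \<Longrightarrow> c j \<le> c k"
    and c_rest: "\<And>k. k \<in> {m..m + int p - 1} - A - {j} \<Longrightarrow> c k \<le> c j"
    unfolding c_def by (rule closest_arc[OF assms(1), of x]) blast
  define R where "R = {m..m + int p - 1}"
  have "cmod z = Re (z * cis (- Arg z))"
    by (rule Re_mult_cis_uminus_Arg[symmetric])
  also have "\<dots> = (\<Sum>i<p. n i * c (int i))"
    by (simp add: z_def c_Re zeta_of_nat sum_distrib_right mult.assoc)
  also have "\<dots> = (\<Sum>k\<in>R. n (nat (k mod int p)) * c k)"
    unfolding R_def sum_lessThan_eq_sum_window_mod[OF \<open>p > 0\<close>, of _ m]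
    using \<open>p > 0\<close> by (simp add: c_Re zeta_mod)
  also have "\<dots> \<le> q * (\<Sum>k\<in>A. c k) + r * c j"
  proof (rule weighted_sum_le_bathtub)
    show "A \<subseteq> R" "j \<in> R" "j \<notin> A"
      using shape assms(1) by (auto simp: R_def)
    have "card A = s"
      using shape by auto
    show "(\<Sum>k\<in>R. n (nat (k mod int p))) = real (card A) * q + r"
      using sum_n sum_lessThan_eq_sum_window_mod[OF \<open>p > 0\<close>, of n m] \<open>card A = s\<close> by (simp add: R_def)
    show "0 \<le> n (nat (k mod int p)) \<and> n (nat (k mod int p)) \<le> q" for k
      using n[of "nat (k mod int p)"] \<open>p > 0\<close> by (simp add: nat_less_iff)
  qed (use c_A c_rest in \<open>auto simp: R_def\<close>)
  also have "\<dots> = Re ((of_real q * (\<Sum>k\<in>A. zeta p k) + of_real r * zeta p j) * cis (- Arg z))"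
    by (simp add: c_Re sum_distrib_left sum_distrib_right algebra_simps)
  also have "\<dots> \<le> cmod ((of_real q * (\<Sum>k\<in>A. zeta p k) + of_real r * zeta p j) * cis (- Arg z))"
    by (rule complex_Re_le_cmod)
  also have "\<dots> = cmod (of_real q * (\<Sum>k\<in>A. zeta p k) + of_real r * zeta p j)"
    by (simp add: norm_mult)
  also have "\<dots> = cmod (of_real q * (\<Sum>i<s. omega p i) + of_real r * omega p s)"
    using shape norm_arc_zeta_right norm_arc_zeta_left by auto
  finally show ?thesis
    by (simp add: z_def)
qed

section \<open>Trace classes of a finite field\<close>

lemma of_nat_card_UNIV_eq_0: "of_nat (card (UNIV :: 'a::{finite,ring_1} set)) = (0::'a)"
proof -
  have "(\<Sum>x\<in>(UNIV::'a set). x + 1) = (\<Sum>x\<in>UNIV. x)"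
    by (rule sum.reindex_bij_witness[of _ "\<lambda>y. y - 1" "\<lambda>y. y + 1"]) auto
  then show ?thesis
    by (simp add: sum.distrib)
qed

text \<open>The library proves this for the class \<open>finite_field\<close>, which the sort
  \<open>{finite,field}\<close> of the statement does not entail syntactically.\<close>

lemma finite_field_power_card:
  fixes x :: "'a::{finite,field}"
  shows "x ^ card (UNIV :: 'a set) = x"
proof (cases "x = 0")
  case True
  then show ?thesis by (simp add: finite_UNIV_card_ge_0)
next
  case False
  define P where "P = (\<Prod>y\<in>UNIV - {0}. y :: 'a)"
  have "P \<noteq> 0"
    by (simp add: P_def)
  have "(\<Prod>y\<in>UNIV - {0}. x * y) = P"
    unfolding P_def
    by (rule prod.reindex_bij_witness[of _ "\<lambda>y. y / x" "\<lambda>y. x * y"]) (use False in auto)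
  then have "x ^ card (UNIV - {0 :: 'a}) * P = P"
    by (simp add: prod.distrib P_def)
  with \<open>P \<noteq> 0\<close> have "x ^ (card (UNIV :: 'a set) - 1) = 1"
    by (simp add: card_Diff_singleton)
  moreover have "card (UNIV :: 'a set) = Suc (card (UNIV :: 'a set) - 1)"
    using finite_UNIV_card_ge_0[where ?'a = 'a] by simp
  ultimately show ?thesis
    by (metis power_Suc mult_1_right)
qed

locale prime_power_field =
  fixes p w :: nat and field_type :: "'a::{finite,field} itself"
  assumes prime_p: "prime p" and w_pos: "w \<ge> 1" and card_UNIV: "card (UNIV :: 'a set) = p ^ w"
begin

lemma p_ge_2: "p \<ge> 2"
  using prime_p prime_ge_2_nat by blast

lemma CHAR_eq: "CHAR('a) = p"
proof -
  have "CHAR('a) dvd p ^ w"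
    using of_nat_card_UNIV_eq_0[where 'a='a] card_UNIV of_nat_eq_0_iff_char_dvd by metis
  moreover have "prime CHAR('a)"
    by (rule prime_CHAR_semidom) (rule finite_imp_CHAR_pos, simp)
  ultimately show ?thesis
    using prime_p prime_dvd_power primes_dvd_imp_eq by blast
qed

lemma of_nat_eq_0_iff_dvd: "(of_nat n :: 'a) = 0 \<longleftrightarrow> p dvd n"
  using CHAR_eq of_nat_eq_0_iff_char_dvd by metis

lemma power_p_power_add: "((x::'a) + y) ^ (p ^ j) = x ^ (p ^ j) + y ^ (p ^ j)"
  by (rule freshmans_dream'[of _ j]) (simp_all add: CHAR_eq prime_p)

lemma power_p_power_sum: "(sum (f :: 'b \<Rightarrow> 'a) A) ^ (p ^ j) = (\<Sum>i\<in>A. f i ^ (p ^ j))"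
  by (rule freshmans_dream_sum'[of _ j]) (simp_all add: CHAR_eq prime_p)

lemma of_nat_power_p: "(of_nat k :: 'a) ^ p = of_nat k"
  using power_p_power_sum[of "\<lambda>_. 1" "{..<k}" 1] by simp

lemma of_nat_eq_iff_below_p:
  assumes "a < p" "b < p"
  shows "(of_nat a :: 'a) = of_nat b \<longleftrightarrow> a = b"
proof
  assume eq: "(of_nat a :: 'a) = of_nat b"
  have "(of_nat (max a b - min a b) :: 'a) = of_nat (max a b) - of_nat (min a b)"
    by (simp add: of_nat_diff)
  also have "\<dots> = 0"
    using eq by (simp add: max_def min_def)
  finally have "p dvd (max a b - min a b)"
    by (simp only: of_nat_eq_0_iff_dvd)
  moreover have "max a b - min a b < p"
    using assms by linarith
  ultimately have "max a b - min a b = 0"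
    using nat_dvd_not_less by blast
  then show "a = b"
    by linarith
qed simp

lemma power_p_eq_self_iff:
  "(y::'a) ^ p = y \<longleftrightarrow> (\<exists>k<p. y = of_nat k)"
proof -
  define P :: "'a poly" where "P = monom 1 p - [:0, 1:]"
  have poly_P: "poly P z = z ^ p - z" for z
    by (simp add: P_def poly_monom)
  have "coeff P p = 1"
    using p_ge_2 by (simp add: P_def coeff_monom coeff_pCons split: nat.split)
  then have "P \<noteq> 0" by auto
  have "degree P \<le> p"
    unfolding P_def using p_ge_2 by (intro degree_diff_le) (auto simp: degree_monom_le)
  have "card {z::'a. z ^ p = z} \<le> p"
    using card_poly_roots_bound[OF \<open>P \<noteq> 0\<close>] \<open>degree P \<le> p\<close> by (simp add: poly_P)
  moreover have sub: "of_nat ` {..<p} \<subseteq> {z::'a. z ^ p = z}"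
    using of_nat_power_p by auto
  moreover have "card (of_nat ` {..<p} :: 'a set) = p"
    by (subst card_image) (auto intro!: inj_onI simp: of_nat_eq_iff_below_p)
  ultimately have "of_nat ` {..<p} = {z::'a. z ^ p = z}"
    using card_mono[OF _ sub] by (intro card_subset_eq) auto
  then show ?thesis by auto
qed

lemma power_p_power_eq_self: "(c::'a) ^ p = c \<Longrightarrow> c ^ (p ^ j) = c"
  by (induction j) (simp_all add: power_mult)

lemma trace_power_p: "field_trace p w (x::'a) ^ p = field_trace p w x"
proof -
  define f where "f j = x ^ (p ^ j)" for j
  have "f w = f 0"
    using finite_field_power_card[of x] by (simp add: f_def card_UNIV)
  have "field_trace p w x ^ (p ^ 1) = (\<Sum>j<w. f (Suc j))"
    unfolding field_trace_def power_p_power_sum by (simp add: f_def power_mult[symmetric] mult.commute)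
  also have "\<dots> = (\<Sum>j<w. f j)"
    using sum.lessThan_Suc_shift[of f w] \<open>f w = f 0\<close> by (simp add: add.commute)
  finally show ?thesis
    by (simp add: f_def field_trace_def)
qed

lemma trace_add: "field_trace p w ((x::'a) + y) = field_trace p w x + field_trace p w y"
  unfolding field_trace_def by (simp add: power_p_power_add sum.distrib)

lemma trace_diff: "field_trace p w ((x::'a) - y) = field_trace p w x - field_trace p w y"
  using trace_add[of "x - y" y] by simp

lemma trace_mult_prime_field:
  "(c::'a) ^ p = c \<Longrightarrow> field_trace p w (c * x) = c * field_trace p w x"
  unfolding field_trace_def
  by (simp add: power_mult_distrib power_p_power_eq_self sum_distrib_left)

lemma trace_val_eqI: "k < p \<Longrightarrow> of_nat k = field_trace p w (x::'a) \<Longrightarrow> trace_val p w x = k"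
  unfolding trace_val_def by (rule the_equality) (use of_nat_eq_iff_below_p in metis)+

lemma trace_val_less: "trace_val p w (x::'a) < p"
  and of_nat_trace_val: "of_nat (trace_val p w x) = field_trace p w (x::'a)"
proof -
  obtain k where "k < p" "field_trace p w x = of_nat k"
    using power_p_eq_self_iff trace_power_p by blast
  then show "trace_val p w x < p" "of_nat (trace_val p w x) = field_trace p w x"
    using trace_val_eqI[of k x] by simp_all
qed

lemma trace_not_identically_zero: "\<exists>x::'a. field_trace p w x \<noteq> 0"
proof (rule ccontr)
  assume trace_zero: "\<not> ?thesis"
  define P :: "'a poly" where "P = (\<Sum>j<w. monom 1 (p ^ j))"
  have poly_P: "poly P z = field_trace p w z" for z
    by (simp add: P_def poly_sum poly_monom field_trace_def)
  have "coeff P 1 = (\<Sum>j<w. if j = 0 then 1 else 0)"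
    unfolding P_def coeff_sum coeff_monom using p_ge_2 by (intro sum.cong) auto
  then have "P \<noteq> 0"
    using w_pos by auto
  have "degree P \<le> p ^ (w - 1)"
    unfolding P_def
  proof (rule degree_sum_le)
    fix j assume "j \<in> {..<w}"
    then have "p ^ j \<le> p ^ (w - 1)"
      using p_ge_2 by (intro power_increasing) auto
    then show "degree (monom (1::'a) (p ^ j)) \<le> p ^ (w - 1)"
      by (simp add: degree_monom_eq)
  qed simp
  have "{z::'a. poly P z = 0} = UNIV"
    using trace_zero by (auto simp: poly_P)
  then have "p ^ w \<le> p ^ (w - 1)"
    using card_poly_roots_bound[OF \<open>P \<noteq> 0\<close>] \<open>degree P \<le> _\<close> card_UNIV by simp
  moreover have "p ^ (w - 1) < p ^ w"
    using p_ge_2 w_pos by (intro power_strict_increasing) auto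
  ultimately show False by simp
qed

lemma exists_trace_eq_1: "\<exists>d::'a. field_trace p w d = 1"
proof -
  obtain c :: 'a where c: "field_trace p w c \<noteq> 0"
    using trace_not_identically_zero by blast
  define t where "t = field_trace p w c"
  have "inverse t ^ p = inverse t"
    using trace_power_p[of c] by (simp add: t_def power_inverse)
  then have "field_trace p w (inverse t * c) = 1"
    using c by (simp add: trace_mult_prime_field t_def)
  then show ?thesis ..
qed

lemma card_trace_class_eq_card_trace_class_0:
  assumes "j < p"
  shows "card (trace_class p w j :: 'a set) = card (trace_class p w 0 :: 'a set)"
proof -
  obtain d :: 'a where d: "field_trace p w d = 1"
    using exists_trace_eq_1 by blast
  have trace_jd: "field_trace p w (of_nat j * d) = of_nat j"
    using d by (simp add: trace_mult_prime_field of_nat_power_p)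
  have "bij_betw (\<lambda>x. x + of_nat j * d) (trace_class p w 0) (trace_class p w j :: 'a set)"
  proof (rule bij_betw_byWitness[where f' = "\<lambda>y. y - of_nat j * d"])
    have "trace_val p w (x + of_nat j * d) = j" if "trace_val p w x = 0" for x
      using of_nat_trace_val[of x] that assms by (intro trace_val_eqI) (simp_all add: trace_add trace_jd)
    then show "(\<lambda>x. x + of_nat j * d) ` trace_class p w 0 \<subseteq> trace_class p w j"
      by (auto simp: trace_class_def)
    have "trace_val p w (y - of_nat j * d) = 0" if "trace_val p w y = j" for y
    proof -
      have "field_trace p w y = of_nat j"
        using of_nat_trace_val[of y] that by simp
      then show ?thesis
        using p_ge_2 by (intro trace_val_eqI) (simp_all add: trace_diff trace_jd)
    qed
    then show "(\<lambda>y. y - of_nat j * d) ` trace_class p w j \<subseteq> trace_class p w 0"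
      by (auto simp: trace_class_def)
  qed auto
  then show ?thesis
    by (rule bij_betw_same_card[symmetric])
qed

lemma disjoint_trace_classes:
  "i \<noteq> j \<Longrightarrow> trace_class p w i \<inter> trace_class p w j = ({} :: 'a set)"
  by (auto simp: trace_class_def)

lemma UN_trace_class: "(\<Union>i<p. trace_class p w i) = (UNIV :: 'a set)"
  using trace_val_less by (auto simp: trace_class_def)

lemma card_trace_class:
  assumes "i < p"
  shows "card (trace_class p w i :: 'a set) = p ^ (w - 1)"
proof -
  have "p * p ^ (w - 1) = p ^ w"
    using w_pos by (cases w) auto
  also have "\<dots> = card (UNIV :: 'a set)"
    by (rule card_UNIV[symmetric])
  also have "\<dots> = (\<Sum>i<p. card (trace_class p w i :: 'a set))"
    unfolding UN_trace_class[symmetric] by (rule card_UN_disjoint) (auto simp: disjoint_trace_classes)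
  also have "\<dots> = (\<Sum>i<p. card (trace_class p w 0 :: 'a set))"
    by (intro sum.cong refl card_trace_class_eq_card_trace_class_0) simp
  finally have "p ^ (w - 1) = card (trace_class p w 0 :: 'a set)"
    using p_ge_2 by simp
  then show ?thesis
    using card_trace_class_eq_card_trace_class_0[OF assms] by simp
qed

lemma omega_sum_subset_trace_class:
  "A \<subseteq> trace_class p w i \<Longrightarrow> omega_sum p w (A :: 'a set) = of_nat (card A) * omega p i"
  unfolding omega_sum_def by (subst sum.cong[OF refl, of _ _ "\<lambda>_. omega p i"]) (auto simp: trace_class_def)

lemma omega_sum_trace_class:
  "i < p \<Longrightarrow> omega_sum p w (trace_class p w i :: 'a set) = of_nat (p ^ (w - 1)) * omega p i"
  using omega_sum_subset_trace_class[of "trace_class p w i" i] card_trace_class[of i] by simp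

lemma omega_sum_UN_trace_classes:
  assumes "finite I" "\<And>i. i \<in> I \<Longrightarrow> A i \<subseteq> trace_class p w i"
  shows "omega_sum p w (\<Union>i\<in>I. A i :: 'a set) = (\<Sum>i\<in>I. omega_sum p w (A i))"
proof -
  have "A i \<inter> A j = {}" if "i \<in> I" "j \<in> I" "i \<noteq> j" for i j
    using assms(2)[OF that(1)] assms(2)[OF that(2)] disjoint_trace_classes[OF that(3)] by blast
  then show ?thesis
    unfolding omega_sum_def using assms(1) by (intro sum.UNION_disjoint) auto
qed

lemma omega_sum_eq_sum_trace_classes:
  "omega_sum p w (S :: 'a set) = (\<Sum>i<p. of_nat (card (S \<inter> trace_class p w i)) * omega p i)"
proof -
  have S_eq: "(\<Union>i<p. S \<inter> trace_class p w i) = S"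
    using UN_trace_class by blast
  have "omega_sum p w (\<Union>i<p. S \<inter> trace_class p w i) = (\<Sum>i<p. omega_sum p w (S \<inter> trace_class p w i))"
    by (rule omega_sum_UN_trace_classes) auto
  then have "omega_sum p w S = (\<Sum>i<p. omega_sum p w (S \<inter> trace_class p w i))"
    by (simp only: S_eq)
  also have "\<dots> = (\<Sum>i<p. of_nat (card (S \<inter> trace_class p w i)) * omega p i)"
    by (intro sum.cong refl omega_sum_subset_trace_class) auto
  finally show ?thesis .
qed

lemma card_eq_sum_trace_classes:
  "card (S :: 'a set) = (\<Sum>i<p. card (S \<inter> trace_class p w i))"
proof -
  have "S = (\<Union>i<p. S \<inter> trace_class p w i)"
    using UN_trace_class by blast
  also have "card \<dots> = (\<Sum>i<p. card (S \<inter> trace_class p w i))"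
    using disjoint_trace_classes by (intro card_UN_disjoint) auto
  finally show ?thesis .
qed

lemma omega_sum_initial_trace_classes:
  assumes "k < p" "T \<subseteq> trace_class p w k"
  shows "omega_sum p w ((\<Union>i<k. trace_class p w i) \<union> T :: 'a set)
           = of_nat (p ^ (w - 1)) * (\<Sum>i<k. omega p i) + of_nat (card T) * omega p k"
proof -
  have "(\<Union>i<k. trace_class p w i) \<union> T = (\<Union>i\<in>{..k}. if i < k then trace_class p w i else T :: 'a set)"
    by (simp add: lessThan_Suc_atMost[symmetric] lessThan_Suc Un_commute) auto
  also have "omega_sum p w \<dots>
      = (\<Sum>i\<le>k. omega_sum p w (if i < k then trace_class p w i else T :: 'a set))"
    using assms(2) by (intro omega_sum_UN_trace_classes) auto
  also have "\<dots> = (\<Sum>i<k. omega_sum p w (trace_class p w i :: 'a set)) + omega_sum p w T"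
    by (simp add: lessThan_Suc_atMost[symmetric])
  also have "\<dots> = (\<Sum>i<k. of_nat (p ^ (w - 1)) * omega p i) + of_nat (card T) * omega p k"
    using assms by (simp add: omega_sum_trace_class omega_sum_subset_trace_class)
  finally show ?thesis
    by (simp add: sum_distrib_left)
qed

lemma norm_omega_sum_le_initial_classes:
  assumes "card S = s1 * p ^ (w - 1) + s2" "s1 < p"
  shows "cmod (omega_sum p w (S :: 'a set))
         \<le> cmod (of_nat (p ^ (w - 1)) * (\<Sum>i<s1. omega p i) + of_nat s2 * omega p s1)"
proof -
  define q where "q = p ^ (w - 1)"
  have "omega_sum p w S = (\<Sum>i<p. of_real (real (card (S \<inter> trace_class p w i))) * omega p i)"
    by (simp add: omega_sum_eq_sum_trace_classes)
  also have "cmod \<dots> \<le> cmod (of_real (real q) * (\<Sum>i<s1. omega p i) + of_real (real s2) * omega p s1)"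
  proof (rule norm_weighted_omega_sum_le_arc[OF assms(2)])
    show "0 \<le> real (card (S \<inter> trace_class p w i)) \<and> real (card (S \<inter> trace_class p w i)) \<le> real q"
      if "i < p" for i
      using card_mono[of "trace_class p w i" "S \<inter> trace_class p w i"] card_trace_class[OF that]
      by (simp add: q_def)
    have "(\<Sum>i<p. card (S \<inter> trace_class p w i)) = s1 * q + s2"
      using card_eq_sum_trace_classes[of S] assms(1) by (simp add: q_def)
    then show "(\<Sum>i<p. real (card (S \<inter> trace_class p w i))) = real s1 * real q + real s2"
      by (metis of_nat_add of_nat_mult of_nat_sum)
  qed
  finally show ?thesis
    by (simp add: q_def)
qed

end

theorem lemma3p2:
  fixes S Tstar :: "'a::{finite,field} set"
    and p w s1 s2 :: nat
  assumes "prime p" and "w \<ge> 1" and "card (UNIV :: 'a set) = p ^ w"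
    and "card S \<le> p ^ w - 1"
    and "card S = s1 * p ^ (w - 1) + s2"
    and "s1 \<le> p - 1" and "s2 \<le> p ^ (w - 1) - 1"
    and "Tstar \<subseteq> trace_class p w s1" and "card Tstar = s2"
  shows "cmod (omega_sum p w S)
           \<le> cmod (omega_sum p w ((\<Union>i<s1. trace_class p w i) \<union> Tstar))
       \<and> cmod (omega_sum p w ((\<Union>i<s1. trace_class p w i) \<union> Tstar))
           = cmod (of_nat s2 * (\<Sum>i\<le>s1. omega p i)
                   + of_nat (p ^ (w - 1) - s2) * (\<Sum>i<s1. omega p i))
       \<and> cmod (omega_sum p w ((\<Union>i<s1. trace_class p w i) \<union> Tstar))
           \<le> real (p ^ (w - 1)) * (sin (pi * real (card S) / real (p ^ w)) / sin (pi / real p))"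
proof -
  interpret prime_power_field p w "TYPE('a)"
    using assms(1-3) by unfold_locales
  define q where "q = p ^ (w - 1)"
  define M where "M = of_nat q * (\<Sum>i<s1. omega p i) + of_nat s2 * omega p s1"
  have "s1 < p" "s2 \<le> q" "0 < q"
    using assms(6,7) p_ge_2 by (auto simp: q_def)
  have "omega_sum p w ((\<Union>i<s1. trace_class p w i) \<union> Tstar) = M"
    using omega_sum_initial_trace_classes[OF \<open>s1 < p\<close> assms(8)] assms(9) by (simp add: M_def q_def)
  moreover have "cmod (omega_sum p w S) \<le> cmod M"
    using norm_omega_sum_le_initial_classes[OF assms(5) \<open>s1 < p\<close>] by (simp add: M_def q_def)
  moreover have "of_nat s2 * (\<Sum>i\<le>s1. omega p i) + of_nat (p ^ (w - 1) - s2) * (\<Sum>i<s1. omega p i) = M"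
    using \<open>s2 \<le> q\<close> by (simp add: M_def q_def lessThan_Suc_atMost[symmetric] of_nat_diff algebra_simps)
  moreover have "cmod M \<le> real q * sin (pi * real (card S) / real (p ^ w)) / sin (pi / real p)"
  proof -
    have "real s1 * real q + real s2 = real (card S)" "real q * real p = real (p ^ w)"
      using assms(2,5) by (simp_all add: q_def power_eq_if)
    then show ?thesis
      using norm_arc_sum_le[of p s1 "real q" "real s2"] p_ge_2 \<open>s1 < p\<close> \<open>0 < q\<close> \<open>s2 \<le> q\<close>
      by (simp add: M_def)
  qed
  ultimately show ?thesis
    by (simp add: q_def)
qed

end
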